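(* Let $\mathcal{A}=(T(\Sigma,X),\Rightarrow_\Pi)$ be an abstract reduction system closed under substitutions, and let $(u_1\Rightarrow_{w_1}v_1,\ u_2\Rightarrow_{w_2}v_2)$ be a recurrent pair in $\mathcal{A}$, with $c_1,c_2,x,y,s,t,n_1,n_2,n_3,n_4$ as in the definition of recurrent pair. Then for all $m,n\in\mathbb{N}$ with $n\ge n_2$ there exist $m',n'\in\mathbb{N}$ with $n'\ge n_2$ such that $c_1[m,n]\ (\Rightarrow_{w_1}^{*}\circ\Rightarrow_{w_2})\ c_1[m',n']$.
   Context: Fix a signature $\Sigma$, a countably infinite set $X$ of variables disjoint from $\Sigma$, and two distinct fresh hole constants $\square,\square'\notin\Sigma\cup X$. Terms are elements of $T(\Sigma,X)$; substitutions $\theta$ (maps $X\to T(\Sigma,X)$ moving finitely many variables) act homomorphically; $\mathit{Var}$ denotes the variable set. An abstract reduction system $(A,\Rightarrow_\Pi)$ has $\Rightarrow_\Pi=\bigcup_{\pi\in\Pi}\Rightarrow_\pi$; for $w=\langle\pi_1,\dots,\pi_k\rangle\in\Pi^*$, $\Rightarrow_w=\Rightarrow_{\pi_1}\circ\cdots\circ\Rightarrow_{\pi_k}$ ($\Rightarrow_\epsilon$ the identity), where $\phi\circ\varphi=\{(a,a'')\mid\exists a_1,(a,a_1)\in\phi,(a_1,a'')\in\varphi\}$; $\Rightarrow_w^*$ is the reflexive-transitive closure of $\Rightarrow_w$. It is closed under substitutions if for all $s,t\in A$, $w\in\Pi^*$ and substitutions $\theta$, $s\Rightarrow_w t$ implies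 $s\theta\Rightarrow_w t\theta$. Let $c_1$ be a term over $\Sigma\cup\{\square,\square'\}$ and $X$ containing at least one occurrence of $\square$ and of $\square'$, and $c_1[t,t']$ the result of replacing all $\square$ by $t$ and all $\square'$ by $t'$. Let $c_2$ be a term over $\Sigma\cup\{\square\}$ and $X$ containing at least one $\square$ (and no $\square'$), $c_2[t]$ the result of replacing all $\square$ by $t$, $c_2^0[t]=t$, $c_2^{k+1}[t]=c_2[c_2^k[t]]$. A recurrent pair in $\mathcal{A}$ is a pair of chains $u_1\Rightarrow_{w_1}v_1$ and $u_2\Rightarrow_{w_2}v_2$ ($w_1,w_2\in\Pi^*$) such that: $u_1=c_1[x,c_2[y]]$, $v_1=c_1[c_2^{n_1}[x],y]$, $u_2=c_1[x,c_2^{n_2}[s]]$, $v_2=c_1[c_2^{n_3}[t],c_2^{n_4}[x]]$ for variables $x\neq y$ with $\{x,y\}\cap\mathit{Var}(c_1)=\emptyset$, a term $s$, naturals $n_1,n_2,n_3,n_4$; $\mathit{Var}(c_2)=\mathit{Var}(s)=\emptyset$; $t\in\{x,s\}$; and $n_4\ge n_2$. For $m,n\in\mathbb{N}$, $c_1[m,n]$ denotes the term $c_1[c_2^m[s],c_2^n[s]]$. *)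

theory Defs
  imports Main "HOL-Library.Countable_Set"
begin

datatype ('f, 'v) trm = Var 'v | Fun 'f "('f, 'v) trm list"

fun vars :: "('f, 'v) trm \<Rightarrow> 'v set" where
  "vars (Var x) = {x}"
| "vars (Fun f ts) = (\<Union>t\<in>set ts. vars t)"

fun subst_apply :: "('f, 'v) trm \<Rightarrow> ('v \<Rightarrow> ('f, 'v) trm) \<Rightarrow> ('f, 'v) trm" where
  "subst_apply (Var x) \<theta> = \<theta> x"
| "subst_apply (Fun f ts) \<theta> = Fun f (map (\<lambda>t. subst_apply t \<theta>) ts)"

definition is_subst :: "('v \<Rightarrow> ('f, 'v) trm) \<Rightarrow> bool" where
  "is_subst \<theta> \<longleftrightarrow> finite {x. \<theta> x \<noteq> Var x}"

text \<open>Symbols extended by the two fresh hole constants.\<close>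
datatype 'f hsym = Sym 'f | Hole | Hole'

fun lift :: "('f, 'v) trm \<Rightarrow> ('f hsym, 'v) trm" where
  "lift (Var x) = Var x"
| "lift (Fun f ts) = Fun (Sym f) (map lift ts)"

fun holes_const :: "('f hsym, 'v) trm \<Rightarrow> bool" where
  "holes_const (Var x) = True"
| "holes_const (Fun (Sym f) ts) = (\<forall>t\<in>set ts. holes_const t)"
| "holes_const (Fun Hole ts) = (ts = [])"
| "holes_const (Fun Hole' ts) = (ts = [])"

fun syms :: "('f hsym, 'v) trm \<Rightarrow> 'f hsym set" where
  "syms (Var x) = {}"
| "syms (Fun f ts) = insert f (\<Union>t\<in>set ts. syms t)"

fun fill2 :: "('f hsym, 'v) trm \<Rightarrow> ('f, 'v) trm \<Rightarrow> ('f, 'v) trm \<Rightarrow> ('f, 'v) trm" where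
  "fill2 (Var x) t t' = Var x"
| "fill2 (Fun (Sym f) ts) t t' = Fun f (map (\<lambda>u. fill2 u t t') ts)"
| "fill2 (Fun Hole ts) t t' = t"
| "fill2 (Fun Hole' ts) t t' = t'"

text \<open>c[t] for a context with only Hole (no Hole').\<close>
definition fill1 :: "('f hsym, 'v) trm \<Rightarrow> ('f, 'v) trm \<Rightarrow> ('f, 'v) trm" where
  "fill1 c t = fill2 c t t"

fun fill_pow :: "('f hsym, 'v) trm \<Rightarrow> nat \<Rightarrow> ('f, 'v) trm \<Rightarrow> ('f, 'v) trm" where
  "fill_pow c 0 t = t"
| "fill_pow c (Suc k) t = fill1 c (fill_pow c k t)"

text \<open>Abstract reduction system (T(Sigma,X), =>_Pi) given by step :: 'p => relation.
  =>_w for a word w = <pi_1,...,pi_k> is the composition =>_{pi_1} o ... o =>_{pi_k}.\<close>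
fun stepw :: "('p \<Rightarrow> (('f, 'v) trm \<times> ('f, 'v) trm) set) \<Rightarrow> 'p list
              \<Rightarrow> (('f, 'v) trm \<times> ('f, 'v) trm) set" where
  "stepw R [] = Id"
| "stepw R (p # ps) = R p O stepw R ps"

definition closed_under_subst :: "('p \<Rightarrow> (('f, 'v) trm \<times> ('f, 'v) trm) set) \<Rightarrow> bool" where
  "closed_under_subst R \<longleftrightarrow>
     (\<forall>s t w \<theta>. is_subst \<theta> \<longrightarrow> (s, t) \<in> stepw R w \<longrightarrow>
        (subst_apply s \<theta>, subst_apply t \<theta>) \<in> stepw R w)"

definition recurrent_pair ::
  "('p \<Rightarrow> (('f, 'v) trm \<times> ('f, 'v) trm) set) \<Rightarrow> 'p list \<Rightarrow> 'p list
   \<Rightarrow> ('f hsym, 'v) trm \<Rightarrow> ('f hsym, 'v) trm \<Rightarrow> 'v \<Rightarrow> 'v \<Rightarrow> ('f, 'v) trm \<Rightarrow> ('f, 'v) trm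
   \<Rightarrow> nat \<Rightarrow> nat \<Rightarrow> nat \<Rightarrow> nat \<Rightarrow> bool" where
  "recurrent_pair R w1 w2 c1 c2 x y s t n1 n2 n3 n4 \<longleftrightarrow>
     holes_const c1 \<and> Hole \<in> syms c1 \<and> Hole' \<in> syms c1 \<and>
     holes_const c2 \<and> Hole \<in> syms c2 \<and> Hole' \<notin> syms c2 \<and>
     x \<noteq> y \<and> x \<notin> vars c1 \<and> y \<notin> vars c1 \<and>
     vars c2 = {} \<and> vars s = {} \<and> (t = Var x \<or> t = s) \<and> n4 \<ge> n2 \<and>
     (fill2 c1 (Var x) (fill1 c2 (Var y)), fill2 c1 (fill_pow c2 n1 (Var x)) (Var y)) \<in> stepw R w1 \<and>
     (fill2 c1 (Var x) (fill_pow c2 n2 s), fill2 c1 (fill_pow c2 n3 t) (fill_pow c2 n4 (Var x))) \<in> stepw R w2"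

text \<open>c1[m,n] = c1[c2^m[s], c2^n[s]].\<close>
definition c1mn :: "('f hsym, 'v) trm \<Rightarrow> ('f hsym, 'v) trm \<Rightarrow> ('f, 'v) trm \<Rightarrow> nat \<Rightarrow> nat \<Rightarrow> ('f, 'v) trm" where
  "c1mn c1 c2 s m n = fill2 c1 (fill_pow c2 m s) (fill_pow c2 n s)"

end

theory Submission
  imports Defs
begin

text \<open>Instantiating x by c2^m[s] and y by c2^k[s] in the first chain of the pair gives
  c1[m, k+1] \<Rightarrow>_w1 c1[m+n1, k]; iterating it lowers the second index to n2, and then instantiating
  x by c2^M[s] in the second chain gives c1[M, n2] \<Rightarrow>_w2 c1[m', n4+M] with n4+M \<ge> n2, since c2
  and s are ground.\<close>

lemma subst_apply_ground: "vars t = {} \<Longrightarrow> subst_apply t \<theta> = t"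
  by (induction t) (auto simp: map_idI)

lemma subst_apply_fill2:
  "(\<forall>z\<in>vars c. \<theta> z = Var z) \<Longrightarrow>
   subst_apply (fill2 c a b) \<theta> = fill2 c (subst_apply a \<theta>) (subst_apply b \<theta>)"
  by (induction c a b rule: fill2.induct) auto

lemma subst_apply_fill_pow:
  "vars c = {} \<Longrightarrow> subst_apply (fill_pow c k a) \<theta> = fill_pow c k (subst_apply a \<theta>)"
  by (induction k) (auto simp: fill1_def subst_apply_fill2)

lemma fill_pow_add: "fill_pow c k (fill_pow c j a) = fill_pow c (k + j) a"
  by (induction k) auto

lemma is_subst_Var: "is_subst Var"
  by (simp add: is_subst_def)

lemma is_subst_fun_upd: "is_subst \<theta> \<Longrightarrow> is_subst (\<theta>(x := A))"
proof -
  have "{z. (\<theta>(x := A)) z \<noteq> Var z} \<subseteq> insert x {z. \<theta> z \<noteq> Var z}" by auto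
  then show "is_subst \<theta> \<Longrightarrow> is_subst (\<theta>(x := A))"
    unfolding is_subst_def by (rule finite_subset) simp
qed

lemma closed_under_substD:
  "closed_under_subst R \<Longrightarrow> is_subst \<theta> \<Longrightarrow> (u, v) \<in> stepw R w \<Longrightarrow>
   (subst_apply u \<theta>, subst_apply v \<theta>) \<in> stepw R w"
  unfolding closed_under_subst_def by blast

lemma recurrent_pair_first_step:
  assumes cl: "closed_under_subst R"
    and rp: "recurrent_pair R w1 w2 c1 c2 x y s t n1 n2 n3 n4"
  shows "(c1mn c1 c2 s m (Suc k), c1mn c1 c2 s (m + n1) k) \<in> stepw R w1"
proof -
  note r = rp[unfolded recurrent_pair_def]
  define \<theta> where "\<theta> = Var(x := fill_pow c2 m s, y := fill_pow c2 k s)"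
  have "(subst_apply (fill2 c1 (Var x) (fill1 c2 (Var y))) \<theta>,
         subst_apply (fill2 c1 (fill_pow c2 n1 (Var x)) (Var y)) \<theta>) \<in> stepw R w1"
    using r by (intro closed_under_substD[OF cl])
      (auto simp: \<theta>_def intro: is_subst_fun_upd is_subst_Var)
  moreover have "\<forall>z\<in>vars c1. \<theta> z = Var z" "\<forall>z\<in>vars c2. \<theta> z = Var z"
    using r by (auto simp: \<theta>_def)
  ultimately show ?thesis
    using r by (simp add: subst_apply_fill2 subst_apply_fill_pow fill_pow_add fill1_def
        c1mn_def \<theta>_def add.commute)
qed

lemma recurrent_pair_first_steps:
  assumes cl: "closed_under_subst R"
    and rp: "recurrent_pair R w1 w2 c1 c2 x y s t n1 n2 n3 n4"
  shows "(c1mn c1 c2 s m (j + k), c1mn c1 c2 s (m + k * n1) j) \<in> (stepw R w1)\<^sup>*"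
proof (induction k arbitrary: m)
  case 0
  then show ?case by simp
next
  case (Suc k)
  have "(c1mn c1 c2 s m (j + Suc k), c1mn c1 c2 s (m + n1) (j + k)) \<in> stepw R w1"
    using recurrent_pair_first_step[OF cl rp, of m "j + k"] by simp
  moreover have "(c1mn c1 c2 s (m + n1) (j + k), c1mn c1 c2 s (m + Suc k * n1) j) \<in> (stepw R w1)\<^sup>*"
    using Suc.IH[of "m + n1"] by (simp add: add.assoc)
  ultimately show ?case by (rule converse_rtrancl_into_rtrancl)
qed

lemma recurrent_pair_second_step:
  assumes cl: "closed_under_subst R"
    and rp: "recurrent_pair R w1 w2 c1 c2 x y s t n1 n2 n3 n4"
  obtains m' where "(c1mn c1 c2 s m n2, c1mn c1 c2 s m' (n4 + m)) \<in> stepw R w2"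
proof -
  note r = rp[unfolded recurrent_pair_def]
  define \<theta> where "\<theta> = Var(x := fill_pow c2 m s)"
  have "(subst_apply (fill2 c1 (Var x) (fill_pow c2 n2 s)) \<theta>,
         subst_apply (fill2 c1 (fill_pow c2 n3 t) (fill_pow c2 n4 (Var x))) \<theta>) \<in> stepw R w2"
    using r by (intro closed_under_substD[OF cl])
      (auto simp: \<theta>_def intro: is_subst_fun_upd is_subst_Var)
  moreover have "\<forall>z\<in>vars c1. \<theta> z = Var z"
    using r by (auto simp: \<theta>_def)
  moreover have "subst_apply t \<theta> = fill_pow c2 (if t = s then 0 else m) s"
    using r by (auto simp: \<theta>_def subst_apply_ground)
  ultimately show ?thesis
    using r by (intro that) (simp add: subst_apply_fill2 subst_apply_fill_pow subst_apply_ground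
        fill_pow_add c1mn_def \<theta>_def)
qed

theorem proposition12:
  fixes R :: "'p \<Rightarrow> (('f, 'v) trm \<times> ('f, 'v) trm) set"
  assumes X: "infinite (UNIV :: 'v set)" "countable (UNIV :: 'v set)"
    and cl: "closed_under_subst R"
    and rp: "recurrent_pair R w1 w2 c1 c2 x y s t n1 n2 n3 n4"
  shows "\<forall>m n. n \<ge> n2 \<longrightarrow> (\<exists>m' n'. n' \<ge> n2 \<and>
           (c1mn c1 c2 s m n, c1mn c1 c2 s m' n') \<in> (stepw R w1)\<^sup>* O stepw R w2)"
proof (intro allI impI)
  fix m n :: nat
  assume "n \<ge> n2"
  define M where "M = m + (n - n2) * n1"
  have "(c1mn c1 c2 s m n, c1mn c1 c2 s M n2) \<in> (stepw R w1)\<^sup>*"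
    using recurrent_pair_first_steps[OF cl rp, of m n2 "n - n2"] \<open>n \<ge> n2\<close> by (simp add: M_def)
  moreover obtain m' where "(c1mn c1 c2 s M n2, c1mn c1 c2 s m' (n4 + M)) \<in> stepw R w2"
    using recurrent_pair_second_step[OF cl rp] .
  moreover have "n4 + M \<ge> n2"
    using rp by (simp add: recurrent_pair_def)
  ultimately show "\<exists>m' n'. n' \<ge> n2 \<and>
           (c1mn c1 c2 s m n, c1mn c1 c2 s m' n') \<in> (stepw R w1)\<^sup>* O stepw R w2"
    by blast
qed

end
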